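(* Let $G_1,\dots,G_k$ be rooted binary trees and let $\mathcal B(G_1,\dots,G_k)$ be the set of compatible bipartitions of $\bigcup_{i=1}^k \mathcal L(G_i)$. Then $|\mathcal B(G_1,\dots,G_k)| \le \frac{4^k}{2}-1$.
   Context: All trees are rooted and binary; $\mathcal L(T)$ denotes the leaf set of $T$. For a tree $G_i$ with root having children $r_l, r_r$, write $G_{i_l}=G_i[r_l]$ and $G_{i_r}=G_i[r_r]$ for its left and right root subtrees. A bipartition $(L_l,L_r)$ of a set is a pair of nonempty disjoint sets whose union is the set, considered up to swapping the two parts. A bipartition $(L_l,L_r)$ of $\bigcup_{i=1}^k\mathcal L(G_i)$ is compatible with $\{G_1,\dots,G_k\}$ if for each $i$ one of the following holds: (1) $\mathcal L(G_i)\subseteq L_l$; (2) $\mathcal L(G_i)\subseteq L_r$; (3) $\mathcal L(G_{i_l})\subseteq L_l$ and $\mathcal L(G_{i_r})\subseteq L_r$; (4) $\mathcal L(G_{i_l})\subseteq L_r$ and $\mathcal L(G_{i_r})\subseteq L_l$. *)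

theory Defs
  imports Complex_Main
begin

datatype 'a btree = Leaf 'a | Node "'a btree" "'a btree"

fun leaves :: "'a btree \<Rightarrow> 'a set" where
  "leaves (Leaf a) = {a}"
| "leaves (Node l r) = leaves l \<union> leaves r"

fun distinct_leaves :: "'a btree \<Rightarrow> bool" where
  "distinct_leaves (Leaf a) = True"
| "distinct_leaves (Node l r) =
     (distinct_leaves l \<and> distinct_leaves r \<and> leaves l \<inter> leaves r = {})"

fun compatible_tree :: "'a set \<Rightarrow> 'a set \<Rightarrow> 'a btree \<Rightarrow> bool" where
  "compatible_tree Ll Lr (Leaf a) = (leaves (Leaf a) \<subseteq> Ll \<or> leaves (Leaf a) \<subseteq> Lr)"
| "compatible_tree Ll Lr (Node l r) =
     (leaves (Node l r) \<subseteq> Ll \<or> leaves (Node l r) \<subseteq> Lr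
      \<or> (leaves l \<subseteq> Ll \<and> leaves r \<subseteq> Lr)
      \<or> (leaves l \<subseteq> Lr \<and> leaves r \<subseteq> Ll))"

definition all_leaves :: "'a btree list \<Rightarrow> 'a set" where
  "all_leaves Gs = (\<Union>G\<in>set Gs. leaves G)"

text \<open>Bipartitions (up to swapping) are represented as the unordered pair {Ll, Lr}.\<close>
definition compatible_bipartitions :: "'a btree list \<Rightarrow> 'a set set set" where
  "compatible_bipartitions Gs =
     {{Ll, Lr} | Ll Lr. Ll \<noteq> {} \<and> Lr \<noteq> {} \<and> Ll \<inter> Lr = {}
        \<and> Ll \<union> Lr = all_leaves Gs
        \<and> (\<forall>G\<in>set Gs. compatible_tree Ll Lr G)}"

end

theory Submission
  imports Defs
begin

text \<open>Orient a compatible bipartition \<open>{A, B}\<close> so that \<open>A\<close> contains \<open>G\<^sub>1\<close> or its left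
subtree. Then \<open>A\<close> is the union of its traces on the trees, and compatibility leaves at most
two traces on \<open>G\<^sub>1\<close> and four on every other tree; since \<open>B\<close> is nonempty, \<open>A\<close> is not the
whole leaf set, so there are at most \<open>2 \<cdot> 4\<^sup>k\<^sup>-\<^sup>1 - 1\<close> choices of \<open>A\<close>, and \<open>A\<close> determines
the bipartition.\<close>

fun cut_sides :: "'a btree \<Rightarrow> 'a set set" where
  "cut_sides (Leaf a) = {{a}, {}}"
| "cut_sides (Node l r) = {leaves l \<union> leaves r, {}, leaves l, leaves r}"

fun leading_sides :: "'a btree \<Rightarrow> 'a set set" where
  "leading_sides (Leaf a) = {{a}}"
| "leading_sides (Node l r) = {leaves l \<union> leaves r, leaves l}"

lemma leaves_in_cut_sides: "leaves G \<in> cut_sides G"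
  by (cases G) auto

lemma leaves_in_leading_sides: "leaves G \<in> leading_sides G"
  by (cases G) auto

lemma card_cut_sides_le: "card (cut_sides G) \<le> 4"
  by (cases G) (auto intro!: card_insert_le_m1)

lemma card_leading_sides_le: "card (leading_sides G) \<le> 2"
  by (cases G) (auto simp: card_insert_if)

lemma finite_cut_sides: "finite (cut_sides G)"
  by (cases G) auto

lemma finite_leading_sides: "finite (leading_sides G)"
  by (cases G) auto

lemma compatible_tree_sym: "compatible_tree A B G = compatible_tree B A G"
  by (cases G) auto

lemma compatible_tree_trace_in_cut_sides:
  assumes "compatible_tree A B G" "A \<inter> B = {}"
  shows "leaves G \<inter> A \<in> cut_sides G"
  using assms by (cases G) auto

lemma compatible_tree_trace_in_leading_sides:
  assumes "compatible_tree A B G" "A \<inter> B = {}"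
  shows "leaves G \<inter> A \<in> leading_sides G \<or> leaves G \<inter> B \<in> leading_sides G"
  using assms by (cases G) auto

fun set_unions :: "'a set set list \<Rightarrow> 'a set set" where
  "set_unions [] = {{}}"
| "set_unions (X # Xs) = (\<lambda>(a, b). a \<union> b) ` (X \<times> set_unions Xs)"

lemma finite_set_unions: "\<forall>X\<in>set Xs. finite X \<Longrightarrow> finite (set_unions Xs)"
  by (induction Xs) auto

lemma card_set_unions_Cons_le:
  assumes "finite X" "\<forall>Y\<in>set Xs. finite Y"
  shows "card (set_unions (X # Xs)) \<le> card X * card (set_unions Xs)"
proof -
  have "finite (X \<times> set_unions Xs)"
    using assms finite_set_unions by blast
  then show ?thesis
    using card_image_le[of "X \<times> set_unions Xs" "\<lambda>(a, b). a \<union> b"]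
    by (simp add: card_cartesian_product)
qed

lemma card_set_unions_le:
  assumes "\<forall>X\<in>set Xs. finite X \<and> card X \<le> c"
  shows "card (set_unions Xs) \<le> c ^ length Xs"
  using assms
proof (induction Xs)
  case Nil
  then show ?case by simp
next
  case (Cons X Xs)
  have "card (set_unions (X # Xs)) \<le> card X * card (set_unions Xs)"
    using Cons.prems by (intro card_set_unions_Cons_le) auto
  also have "\<dots> \<le> c * c ^ length Xs"
    using Cons by (intro mult_mono) auto
  finally show ?case by simp
qed

lemma UN_in_set_unions:
  "(\<And>x. x \<in> set xs \<Longrightarrow> f x \<in> F x) \<Longrightarrow> (\<Union>x\<in>set xs. f x) \<in> set_unions (map F xs)"
  by (induction xs) force+

lemma oriented_side_in_set_unions:
  assumes "A \<inter> B = {}" "A \<union> B = all_leaves (G # Gs)"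
    and "\<forall>H\<in>set (G # Gs). compatible_tree A B H"
    and "leaves G \<inter> A \<in> leading_sides G"
  shows "A \<in> set_unions (leading_sides G # map cut_sides Gs)"
proof -
  have "A = (leaves G \<inter> A) \<union> (\<Union>H\<in>set Gs. leaves H \<inter> A)"
    using assms(2) unfolding all_leaves_def by auto
  moreover have "(\<Union>H\<in>set Gs. leaves H \<inter> A) \<in> set_unions (map cut_sides Gs)"
    using assms(1,3) by (intro UN_in_set_unions compatible_tree_trace_in_cut_sides) auto
  ultimately show ?thesis
    using assms(4) by (simp add: image_iff) blast
qed

lemma compatible_bipartitions_subset_image:
  "compatible_bipartitions (G # Gs) \<subseteq>
     (\<lambda>A. {A, all_leaves (G # Gs) - A}) `
       (set_unions (leading_sides G # map cut_sides Gs) - {all_leaves (G # Gs)})"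
proof
  fix p assume "p \<in> compatible_bipartitions (G # Gs)"
  then obtain A B where p: "p = {A, B}" and nonempty: "A \<noteq> {}" "B \<noteq> {}"
    and disj: "A \<inter> B = {}" and cover: "A \<union> B = all_leaves (G # Gs)"
    and compat: "\<forall>H\<in>set (G # Gs). compatible_tree A B H"
    unfolding compatible_bipartitions_def by blast
  have swap: "B \<inter> A = {}" "B \<union> A = all_leaves (G # Gs)"
    "\<forall>H\<in>set (G # Gs). compatible_tree B A H"
    using disj cover compat compatible_tree_sym by blast+
  have "{A, B} = {B, A}" by blast
  moreover have "leaves G \<inter> A \<in> leading_sides G \<or> leaves G \<inter> B \<in> leading_sides G"
    using compat disj by (intro compatible_tree_trace_in_leading_sides) auto
  ultimately obtain X Y where XY: "p = {X, Y}" "Y \<noteq> {}" "X \<inter> Y = {}"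
    "X \<union> Y = all_leaves (G # Gs)" "\<forall>H\<in>set (G # Gs). compatible_tree X Y H"
    "leaves G \<inter> X \<in> leading_sides G"
    using p nonempty disj cover compat swap by metis
  then have "X \<in> set_unions (leading_sides G # map cut_sides Gs) - {all_leaves (G # Gs)}"
    using oriented_side_in_set_unions[of X Y] by auto
  moreover have "p = {X, all_leaves (G # Gs) - X}"
    using XY by auto
  ultimately show "p \<in> (\<lambda>A. {A, all_leaves (G # Gs) - A}) `
       (set_unions (leading_sides G # map cut_sides Gs) - {all_leaves (G # Gs)})"
    by blast
qed

lemma card_compatible_bipartitions_le:
  "card (compatible_bipartitions (G # Gs)) \<le> 2 * 4 ^ length Gs - 1"
proof -
  define U where "U = set_unions (leading_sides G # map cut_sides Gs)"
  have fin: "finite U"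
    unfolding U_def by (intro finite_set_unions) (auto simp: finite_leading_sides finite_cut_sides)
  have "card U \<le> card (leading_sides G) * card (set_unions (map cut_sides Gs))"
    unfolding U_def
    by (intro card_set_unions_Cons_le) (auto simp: finite_leading_sides finite_cut_sides)
  also have "\<dots> \<le> 2 * 4 ^ length Gs"
  proof (rule mult_mono)
    show "card (set_unions (map cut_sides Gs)) \<le> 4 ^ length Gs"
      using card_set_unions_le[of "map cut_sides Gs" 4]
      by (simp add: finite_cut_sides card_cut_sides_le)
  qed (simp_all add: card_leading_sides_le)
  finally have card_U: "card U \<le> 2 * 4 ^ length Gs" .
  have "(\<Union>H\<in>set Gs. leaves H) \<in> set_unions (map cut_sides Gs)"
    by (rule UN_in_set_unions) (rule leaves_in_cut_sides)
  then have "all_leaves (G # Gs) \<in> U"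
    unfolding U_def all_leaves_def using leaves_in_leading_sides[of G]
    by (auto intro!: image_eqI[where x = "(leaves G, \<Union>H\<in>set Gs. leaves H)"])
  then have "card (U - {all_leaves (G # Gs)}) = card U - 1"
    using fin by simp
  moreover have "card (compatible_bipartitions (G # Gs)) \<le> card (U - {all_leaves (G # Gs)})"
    using compatible_bipartitions_subset_image[of G Gs] fin unfolding U_def[symmetric]
    by (meson card_image_le card_mono finite_Diff finite_imageI order_trans)
  ultimately show ?thesis
    using card_U by linarith
qed

theorem lemma2:
  fixes Gs :: "'a btree list"
  assumes "length Gs \<ge> 1"
    and "\<forall>G\<in>set Gs. distinct_leaves G"
  shows "real (card (compatible_bipartitions Gs)) \<le> 4 ^ length Gs / 2 - 1"
proof -
  \<comment> \<open>The bound holds without distinct leaf labels.\<close>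
  obtain G Hs where Gs: "Gs = G # Hs"
    using assms(1) by (cases Gs) auto
  have "real (card (compatible_bipartitions Gs)) \<le> real (2 * 4 ^ length Hs - 1)"
    using card_compatible_bipartitions_le[of G Hs] unfolding Gs of_nat_le_iff .
  also have "\<dots> = 4 ^ length Gs / 2 - 1"
    unfolding Gs by (simp add: of_nat_diff)
  finally show ?thesis .
qed

end
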